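(* Let $\mathbf{J}\in\mathbb{R}^{n\times n}$ be a real symmetric matrix with zero diagonal, and let $\alpha,\beta>0$ be such that $\lambda_{\min}(\mathbf{J}+\alpha\mathbf{I})>0$. Let $\mathcal{T}(\boldsymbol{x})=\varphi(\beta^{-1}(\mathbf{J}+\alpha\mathbf{I})\boldsymbol{x})$ with $\varphi$ the componentwise real cube root, let $\boldsymbol{x}^{(0)}\in\mathbb{R}^n$ be arbitrary, $\boldsymbol{x}^{(k+1)}=\mathcal{T}(\boldsymbol{x}^{(k)})$, and let $\boldsymbol{x}^*$ be the limit of $\{\boldsymbol{x}^{(k)}\}$. Suppose all components of $\boldsymbol{x}^*$ are nonzero and $\|\mathbf{J}_{\mathcal{T}}(\boldsymbol{x}^* )\|_2<1$, where $\mathbf{J}_{\mathcal{T}}$ denotes the Jacobian matrix of $\mathcal{T}$ and $\|\cdot\|_2$ the spectral norm (largest singular value). Then $\boldsymbol{x}^*$ is a strict local minimizer of $\mathcal{H}(\boldsymbol{x})=\frac{\beta}{4}\sum_i x_i^4-\frac{\alpha}{2}\sum_i x_i^2-\frac12\boldsymbol{x}^\top\mathbf{J}\boldsymbol{x}$.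
   Context: Under the stated hypotheses the iterates $\boldsymbol{x}^{(k)}$ (the DOCH iterates for minimizing $\mathcal{H}$) converge, so the limit $\boldsymbol{x}^*$ exists. *)

theory Defs
  imports "HOL-Analysis.Analysis"
begin

text \<open>Smallest eigenvalue of a real square matrix (used for symmetric matrices,
  whose eigenvalues are all real).\<close>
definition lambda_min :: "real^'n^'n \<Rightarrow> real" where
  "lambda_min A = Inf {l. \<exists>v. v \<noteq> 0 \<and> A *v v = l *\<^sub>R v}"

definition doch_map :: "real^'n^'n \<Rightarrow> real \<Rightarrow> real \<Rightarrow> real^'n \<Rightarrow> real^'n" where
  "doch_map J \<alpha> \<beta> x = (\<chi> i. root 3 ((inverse \<beta> *\<^sub>R ((J + \<alpha> *\<^sub>R mat 1) *v x)) $ i))"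

definition H_obj :: "real^'n^'n \<Rightarrow> real \<Rightarrow> real \<Rightarrow> real^'n \<Rightarrow> real" where
  "H_obj J \<alpha> \<beta> x = \<beta> / 4 * (\<Sum>i\<in>UNIV. (x $ i) ^ 4) - \<alpha> / 2 * (\<Sum>i\<in>UNIV. (x $ i) ^ 2)
     - 1 / 2 * (x \<bullet> (J *v x))"

definition strict_local_min :: "('a::metric_space \<Rightarrow> real) \<Rightarrow> 'a \<Rightarrow> bool" where
  "strict_local_min f x0 \<longleftrightarrow> (\<exists>e>0. \<forall>y. y \<noteq> x0 \<and> dist y x0 < e \<longrightarrow> f x0 < f y)"

end

(* At the limit xs of the iteration, continuity makes xs a fixed point of T, and the fixed-point
   equation beta xs_i^3 = ((J + alpha I) xs)_i says exactly that xs is a critical point of H.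
   With D = diag(3 beta xs_i^2), the Jacobian of T at xs is B = D^-1 (J + alpha I), which is
   self-adjoint for the inner product <y, z>_D = y^T D z.  A self-adjoint operator of norm < 1
   satisfies <B h, h>_D < <h, h>_D for h ~= 0, i.e. h^T (J + alpha I) h < h^T D h: the Hessian
   D - (J + alpha I) of H at xs is positive definite.  Since H is a quartic polynomial,
   H(xs + h) - H(xs) >= mu |h|^2 - beta |xs| |h|^3 near 0, so xs is a strict local minimizer. *)
theory Submission
  imports Defs
begin

lemma matrix_vector_mult_inner_symmetric:
  fixes J :: "real^'n^'n"
  assumes "transpose J = J"
  shows "(J *v y) \<bullet> z = y \<bullet> (J *v z)"
  by (metis assms dot_lmul_matrix transpose_matrix_vector)

lemma has_derivative_vec_lambda:
  fixes f :: "'a::real_normed_vector \<Rightarrow> 'n::finite \<Rightarrow> real"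
  assumes "\<And>i. ((\<lambda>x. f x i) has_derivative (\<lambda>h. f' h i)) (at a within S)"
  shows "((\<lambda>x. \<chi> i. f x i) has_derivative (\<lambda>h. \<chi> i. f' h i)) (at a within S)"
proof (rule has_derivative_componentwise_within[THEN iffD2], intro ballI)
  fix b :: "real^'n"
  assume "b \<in> Basis"
  then obtain i where "b = axis i 1"
    unfolding Basis_vec_def by auto
  then have "v \<bullet> b = v $ i" for v :: "real^'n"
    by (simp only: inner_axis inner_real_def mult_1_right)
  then show "((\<lambda>x. (\<chi> i. f x i) \<bullet> b) has_derivative (\<lambda>h. (\<chi> i. f' h i) \<bullet> b)) (at a within S)"
    using assms[of i] by (simp only: vec_lambda_beta)
qed

lemma limit_of_iteration_is_fixed_point:
  assumes "\<And>k. x (Suc k) = f (x k)" and "x \<longlonglongrightarrow> l" and "isCont f l"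
  shows "f l = l"
proof (rule LIMSEQ_unique)
  show "(\<lambda>k. f (x k)) \<longlonglongrightarrow> f l"
    by (rule isCont_tendsto_compose[OF assms(3) assms(2)])
  show "(\<lambda>k. f (x k)) \<longlonglongrightarrow> l"
    using LIMSEQ_Suc[OF assms(2)] by (simp add: assms(1))
qed

definition weighted_inner :: "('n::finite \<Rightarrow> real) \<Rightarrow> real^'n \<Rightarrow> real^'n \<Rightarrow> real" where
  "weighted_inner w y z = (\<Sum>i\<in>UNIV. w i * y $ i * z $ i)"

lemma weighted_inner_commute: "weighted_inner w y z = weighted_inner w z y"
  unfolding weighted_inner_def by (simp add: mult_ac)

lemma weighted_inner_scaleR:
  "weighted_inner w (t *\<^sub>R y) (t *\<^sub>R y) = t\<^sup>2 * weighted_inner w y y"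
  unfolding weighted_inner_def sum_distrib_left
  by (intro sum.cong) (auto simp: power2_eq_square mult_ac)

lemma weighted_inner_Cauchy_Schwarz:
  assumes "\<And>i. w i \<ge> 0"
  shows "(weighted_inner w y z)\<^sup>2 \<le> weighted_inner w y y * weighted_inner w z z"
proof -
  have yz: "weighted_inner w y z = (\<Sum>i\<in>UNIV. (sqrt (w i) * y $ i) * (sqrt (w i) * z $ i))"
    unfolding weighted_inner_def using assms
    by (intro sum.cong) (auto simp: mult_ac real_sqrt_mult[symmetric])
  have self: "weighted_inner w v v = (\<Sum>i\<in>UNIV. (sqrt (w i) * v $ i)\<^sup>2)" for v
    unfolding weighted_inner_def using assms
    by (intro sum.cong) (auto simp: power_mult_distrib power2_eq_square[of "v $ _"])
  show ?thesis
    unfolding yz self by (rule Cauchy_Schwarz_ineq_sum)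
qed

lemma norm_square_eq_sum_cart: "(norm y)\<^sup>2 = (\<Sum>i\<in>UNIV. y $ i * y $ i)"
  by (simp add: power2_norm_eq_inner inner_vec_def)

lemma weighted_inner_ge_norm:
  assumes "\<And>i. c \<le> w i"
  shows "c * (norm y)\<^sup>2 \<le> weighted_inner w y y"
  unfolding norm_square_eq_sum_cart weighted_inner_def sum_distrib_left
  by (intro sum_mono) (metis assms mult.assoc mult_right_mono zero_le_square)

lemma weighted_inner_le_norm:
  assumes "\<And>i. w i \<le> C"
  shows "weighted_inner w y y \<le> C * (norm y)\<^sup>2"
  unfolding norm_square_eq_sum_cart weighted_inner_def sum_distrib_left
  by (intro sum_mono) (metis assms mult.assoc mult_right_mono zero_le_square)

text \<open>If \<open>\<langle>B h, h\<rangle> \<ge> \<langle>h, h\<rangle>\<close>, Cauchy-Schwarz gives \<open>\<langle>B\<^sup>2 h, h\<rangle> = \<langle>B h, B h\<rangle> \<ge> \<langle>h, h\<rangle>\<close>;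
  iterating squares the exponent.\<close>
lemma selfadjoint_iterate_pow2_ge:
  fixes B :: "'a \<Rightarrow> 'a" and ip :: "'a \<Rightarrow> 'a \<Rightarrow> real"
  assumes selfadjoint: "\<And>y z. ip (B y) z = ip y (B z)"
    and Cauchy_Schwarz: "\<And>y z. (ip y z)\<^sup>2 \<le> ip y y * ip z z"
    and pos: "ip h h > 0"
    and ge: "ip (B h) h \<ge> ip h h"
  shows "ip ((B ^^ 2^k) h) ((B ^^ 2^k) h) \<ge> ip h h"
proof -
  have selfadjoint_iterate: "ip ((B ^^ n) y) z = ip y ((B ^^ n) z)" for n y z
    by (induction n arbitrary: y z) (simp_all add: selfadjoint funpow_swap1)
  have self_ge: "ip v v \<ge> ip h h" if "ip v h \<ge> ip h h" for v
  proof -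
    have "ip h h * ip h h \<le> (ip v h)\<^sup>2"
      using that pos by (simp add: power2_eq_square mult_mono')
    also have "\<dots> \<le> ip v v * ip h h"
      using Cauchy_Schwarz by simp
    finally show ?thesis
      using pos by simp
  qed
  show ?thesis
  proof (induction k)
    case 0
    then show ?case using self_ge ge by simp
  next
    case (Suc k)
    have "(B ^^ 2^Suc k) h = (B ^^ 2^k) ((B ^^ 2^k) h)"
      by (simp only: power_Suc mult_2 funpow_add comp_apply)
    then have "ip ((B ^^ 2^Suc k) h) h = ip ((B ^^ 2^k) h) ((B ^^ 2^k) h)"
      by (simp add: selfadjoint_iterate)
    then show ?case using Suc self_ge by simp
  qed
qed

lemma contraction_iterate_norm_le:
  fixes B :: "'a::real_normed_vector \<Rightarrow> 'a"
  assumes "\<And>y. norm (B y) \<le> c * norm y" and "c \<ge> 0"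
  shows "norm ((B ^^ n) y) \<le> c ^ n * norm y"
proof (induction n)
  case 0
  then show ?case by simp
next
  case (Suc n)
  have "norm ((B ^^ Suc n) y) \<le> c * norm ((B ^^ n) y)"
    using assms(1) by simp
  also have "\<dots> \<le> c * (c ^ n * norm y)"
    using Suc assms(2) by (rule mult_left_mono)
  finally show ?case by (simp add: mult_ac)
qed

lemma weighted_inner_norm_bounds:
  assumes "\<And>i. w i > 0"
  obtains m M where "m > 0" and "M > 0"
    and "\<And>y. m * (norm y)\<^sup>2 \<le> weighted_inner w y y"
    and "\<And>y. weighted_inner w y y \<le> M * (norm y)\<^sup>2"
proof
  show "Min (range w) > 0" and "Max (range w) > 0"
    using assms by (auto simp: Min_gr_iff Max_gr_iff)
  show "Min (range w) * (norm y)\<^sup>2 \<le> weighted_inner w y y"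
    and "weighted_inner w y y \<le> Max (range w) * (norm y)\<^sup>2" for y
    by (simp_all add: weighted_inner_ge_norm weighted_inner_le_norm)
qed

lemma pow2_power_square_less:
  fixes c \<epsilon> :: real
  assumes "0 \<le> c" and "c < 1" and "\<epsilon> > 0"
  obtains k where "(c ^ 2^k)\<^sup>2 < \<epsilon>"
proof -
  obtain k where k: "c ^ k < \<epsilon>"
    using real_arch_pow_inv[OF \<open>\<epsilon> > 0\<close> \<open>c < 1\<close>] by blast
  have "k \<le> 2^k * 2"
    using less_exp[of k] by linarith
  then have "(c ^ 2^k)\<^sup>2 \<le> c ^ k"
    using assms by (simp add: power_decreasing flip: power_mult)
  with k have "(c ^ 2^k)\<^sup>2 < \<epsilon>"
    by linarith
  then show ?thesis
    by (rule that)
qed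

text \<open>\<open>B\<close> is self-adjoint for \<open>weighted_inner w\<close>, so \<open>A h \<bullet> h \<ge> weighted_inner w h h\<close> would
  force \<open>weighted_inner w ((B ^^ 2^k) h) ((B ^^ 2^k) h) \<ge> weighted_inner w h h\<close> for all \<open>k\<close>,
  contradicting the contraction.\<close>
lemma contraction_weighted_selfadjoint_less:
  fixes A :: "real^'n \<Rightarrow> real^'n" and w :: "'n \<Rightarrow> real"
  defines "B \<equiv> \<lambda>y. \<chi> i. A y $ i / w i"
  assumes w_pos: "\<And>i. w i > 0"
    and symmetric: "\<And>y z. A y \<bullet> z = y \<bullet> A z"
    and contraction: "\<And>y. norm (B y) \<le> c * norm y" and "c < 1"
    and "h \<noteq> 0"
  shows "A h \<bullet> h < weighted_inner w h h"
proof (rule ccontr)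
  assume not_less: "\<not> A h \<bullet> h < weighted_inner w h h"
  obtain m M where "m > 0" "M > 0"
    and lower: "\<And>y. m * (norm y)\<^sup>2 \<le> weighted_inner w y y"
    and upper: "\<And>y. weighted_inner w y y \<le> M * (norm y)\<^sup>2"
    using weighted_inner_norm_bounds[of w, OF w_pos] by blast
  have norm_h: "norm h > 0"
    using \<open>h \<noteq> 0\<close> by simp
  have "0 \<le> c * norm h"
    using contraction[of h] norm_ge_zero order_trans by blast
  then have "c \<ge> 0"
    using norm_h by (simp add: zero_le_mult_iff)
  have inner_B: "weighted_inner w (B y) z = A y \<bullet> z" for y z
    unfolding weighted_inner_def B_def inner_vec_def
    by (intro sum.cong) (auto simp: w_pos less_imp_neq[symmetric])
  have selfadjoint: "weighted_inner w (B y) z = weighted_inner w y (B z)" for y z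
    by (metis inner_B symmetric inner_commute weighted_inner_commute)
  have ge: "weighted_inner w (B h) h \<ge> weighted_inner w h h"
    using not_less by (simp add: inner_B)
  have Cauchy_Schwarz: "(weighted_inner w y z)\<^sup>2 \<le> weighted_inner w y y * weighted_inner w z z" for y z
    by (rule weighted_inner_Cauchy_Schwarz) (simp add: w_pos less_imp_le)
  have "0 < m * (norm h)\<^sup>2"
    using \<open>m > 0\<close> norm_h by simp
  then have h_pos: "weighted_inner w h h > 0"
    using lower[of h] by linarith
  obtain k where "(c ^ 2^k)\<^sup>2 < m / M"
    using pow2_power_square_less[OF \<open>c \<ge> 0\<close> \<open>c < 1\<close> divide_pos_pos[OF \<open>m > 0\<close> \<open>M > 0\<close>]] .
  then have small: "M * (c ^ 2^k)\<^sup>2 < m"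
    using \<open>M > 0\<close> by (simp add: field_simps)
  have "weighted_inner w h h \<le> weighted_inner w ((B ^^ 2^k) h) ((B ^^ 2^k) h)"
    by (rule selfadjoint_iterate_pow2_ge[where ip = "weighted_inner w", OF selfadjoint Cauchy_Schwarz h_pos ge])
  also have "\<dots> \<le> M * (norm ((B ^^ 2^k) h))\<^sup>2"
    by (rule upper)
  also have "\<dots> \<le> M * (c ^ 2^k * norm h)\<^sup>2"
    using contraction_iterate_norm_le[OF contraction \<open>c \<ge> 0\<close>] \<open>M > 0\<close>
    by (intro mult_left_mono power_mono) auto
  also have "\<dots> = (M * (c ^ 2^k)\<^sup>2) * (norm h)\<^sup>2"
    by (simp add: power_mult_distrib)
  also have "\<dots> < m * (norm h)\<^sup>2"
    using small norm_h by simp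
  finally show False
    using lower[of h] by simp
qed

lemma homogeneous_quadratic_coercive:
  fixes q :: "'a::euclidean_space \<Rightarrow> real"
  assumes cont: "continuous_on UNIV q"
    and homogeneous: "\<And>t h. q (t *\<^sub>R h) = t\<^sup>2 * q h"
    and pos: "\<And>h. h \<noteq> 0 \<Longrightarrow> q h > 0"
  obtains \<mu> where "\<mu> > 0" and "\<And>h. \<mu> * (norm h)\<^sup>2 \<le> q h"
proof -
  have "sphere (0::'a) 1 \<noteq> {}"
    by simp
  then obtain u where u: "u \<in> sphere 0 1" and u_min: "\<And>v. v \<in> sphere 0 1 \<Longrightarrow> q u \<le> q v"
    using continuous_attains_inf[OF compact_sphere _ continuous_on_subset[OF cont subset_UNIV]]
    by blast
  have "u \<noteq> 0"
    using u by auto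
  then have "q u > 0"
    by (rule pos)
  moreover have "q u * (norm h)\<^sup>2 \<le> q h" for h
  proof (cases "h = 0")
    case True
    then show ?thesis
      using homogeneous[of 0 0] by simp
  next
    case False
    then have "inverse (norm h) *\<^sub>R h \<in> sphere 0 1"
      by simp
    then have "q u \<le> q (inverse (norm h) *\<^sub>R h)"
      by (rule u_min)
    moreover have "q h = (norm h)\<^sup>2 * q (inverse (norm h) *\<^sub>R h)"
      using False by (simp flip: homogeneous)
    ultimately show ?thesis
      by (metis mult.commute mult_right_mono zero_le_power2)
  qed
  ultimately show ?thesis
    using that by blast
qed

lemma strict_local_min_of_quadratic_growth:
  fixes f :: "'a::real_normed_vector \<Rightarrow> real"
  assumes "\<mu> > 0" and "K \<ge> 0"
    and growth: "\<And>h. \<mu> * (norm h)\<^sup>2 - K * norm h ^ 3 \<le> f (x0 + h) - f x0"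
  shows "strict_local_min f x0"
  unfolding strict_local_min_def
proof (intro exI conjI allI impI)
  show "\<mu> / (K + 1) > 0"
    using assms by simp
  fix y
  assume y: "y \<noteq> x0 \<and> dist y x0 < \<mu> / (K + 1)"
  define h where "h = y - x0"
  have "norm h > 0"
    using y by (simp add: h_def)
  have "(K + 1) * norm h < \<mu>"
    using y \<open>K \<ge> 0\<close> by (simp add: h_def dist_norm field_simps)
  then have "K * norm h < \<mu>"
    using \<open>norm h > 0\<close> unfolding distrib_right by linarith
  then have "0 < (\<mu> - K * norm h) * (norm h)\<^sup>2"
    using \<open>norm h > 0\<close> by simp
  also have "\<dots> = \<mu> * (norm h)\<^sup>2 - K * norm h ^ 3"
    by (simp add: algebra_simps power2_eq_square power3_eq_cube)
  also have "\<dots> \<le> f y - f x0"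
    using growth[of h] by (simp add: h_def)
  finally show "f x0 < f y"
    by simp
qed

lemma sum_cubic_quartic_ge:
  fixes x h :: "real^'n"
  shows "- (norm x * norm h ^ 3) \<le> (\<Sum>i\<in>UNIV. x $ i * h $ i ^ 3 + h $ i ^ 4 / 4)"
proof -
  have term_ge: "- (norm x * norm h) * (h $ i * h $ i) \<le> x $ i * h $ i ^ 3 + h $ i ^ 4 / 4" for i
  proof -
    have "\<bar>x $ i * h $ i\<bar> \<le> norm x * norm h"
      by (simp add: abs_mult mult_mono component_le_norm_cart)
    then have "- (norm x * norm h) * (h $ i * h $ i) \<le> (x $ i * h $ i) * (h $ i * h $ i)"
      by (intro mult_right_mono) auto
    moreover have "x $ i * h $ i ^ 3 = (x $ i * h $ i) * (h $ i * h $ i)"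
      by (simp add: power3_eq_cube mult_ac)
    moreover have "h $ i ^ 4 / 4 \<ge> 0"
      by simp
    ultimately show ?thesis
      by linarith
  qed
  have "- (norm x * norm h ^ 3) = - (norm x * norm h) * (norm h)\<^sup>2"
    by (simp add: power2_eq_square power3_eq_cube)
  also have "\<dots> = (\<Sum>i\<in>UNIV. - (norm x * norm h) * (h $ i * h $ i))"
    by (simp add: norm_square_eq_sum_cart sum_distrib_left)
  also have "\<dots> \<le> (\<Sum>i\<in>UNIV. x $ i * h $ i ^ 3 + h $ i ^ 4 / 4)"
    by (intro sum_mono term_ge)
  finally show ?thesis .
qed

lemma weighted_inner_minus_coercive:
  fixes A :: "real^'n \<Rightarrow> real^'n"
  assumes "linear A" and pos: "\<And>h. h \<noteq> 0 \<Longrightarrow> A h \<bullet> h < weighted_inner w h h"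
  obtains \<mu> where "\<mu> > 0" and "\<And>h. \<mu> * (norm h)\<^sup>2 \<le> weighted_inner w h h - A h \<bullet> h"
proof (rule homogeneous_quadratic_coercive)
  have "continuous_on UNIV A"
    using \<open>linear A\<close> by (simp add: linear_continuous_on linear_conv_bounded_linear)
  then show "continuous_on UNIV (\<lambda>h. weighted_inner w h h - A h \<bullet> h)"
    unfolding weighted_inner_def by (intro continuous_intros)
  show "weighted_inner w (t *\<^sub>R h) (t *\<^sub>R h) - A (t *\<^sub>R h) \<bullet> (t *\<^sub>R h)
      = t\<^sup>2 * (weighted_inner w h h - A h \<bullet> h)" for t h
    using \<open>linear A\<close> by (simp add: weighted_inner_scaleR linear_scale power2_eq_square algebra_simps)
  show "h \<noteq> 0 \<Longrightarrow> weighted_inner w h h - A h \<bullet> h > 0" for h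
    using pos[of h] by simp
qed (use that in blast)

lemma bounded_linear_matrix_plus_scaleR:
  fixes J :: "real^'n^'n"
  shows "bounded_linear (\<lambda>y. J *v y + c *\<^sub>R y)"
  by (rule bounded_linear_add[OF matrix_vector_mul_bounded_linear bounded_linear_scaleR_right])

lemma doch_map_eq: "doch_map J \<alpha> \<beta> y = (\<chi> i. root 3 ((J *v y + \<alpha> *\<^sub>R y) $ i / \<beta>))"
proof -
  have "(J + \<alpha> *\<^sub>R mat 1) *v y = J *v y + \<alpha> *\<^sub>R y"
    by (simp add: matrix_vector_mult_add_rdistrib flip: scaleR_matrix_vector_assoc)
  then show ?thesis
    by (simp add: doch_map_def divide_inverse mult.commute)
qed

lemma doch_map_fixed_point_cube:
  assumes "\<beta> \<noteq> 0" and "doch_map J \<alpha> \<beta> x = x"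
  shows "\<beta> * x $ i ^ 3 = (J *v x + \<alpha> *\<^sub>R x) $ i"
proof -
  define r where "r = (J *v x + \<alpha> *\<^sub>R x) $ i / \<beta>"
  have "x $ i = root 3 r"
    using assms(2) by (metis doch_map_eq vec_lambda_beta r_def)
  then have "x $ i ^ 3 = r"
    by (simp add: odd_real_root_pow)
  then show ?thesis
    using assms(1) by (simp add: r_def field_simps)
qed

lemma doch_map_has_derivative:
  assumes "\<beta> \<noteq> 0" and nonzero: "\<And>i. doch_map J \<alpha> \<beta> x $ i \<noteq> 0"
  shows "(doch_map J \<alpha> \<beta> has_derivative
      (\<lambda>h. \<chi> i. (J *v h + \<alpha> *\<^sub>R h) $ i / (3 * \<beta> * (doch_map J \<alpha> \<beta> x $ i)\<^sup>2))) (at x)"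
proof -
  define a where "a = (\<lambda>i y. (J *v y + \<alpha> *\<^sub>R y) $ i / \<beta>)"
  have T_eq: "doch_map J \<alpha> \<beta> = (\<lambda>y. \<chi> i. root 3 (a i y))"
    by (simp add: a_def doch_map_eq[abs_def])
  have "((\<lambda>y. root 3 (a i y)) has_derivative
      (\<lambda>h. (J *v h + \<alpha> *\<^sub>R h) $ i / (3 * \<beta> * (root 3 (a i x))\<^sup>2))) (at x)" for i
  proof -
    have "a i x \<noteq> 0"
      using nonzero[of i] by (simp add: T_eq)
    then have root_deriv: "DERIV (root 3) (a i x) :> inverse (3 * (root 3 (a i x))\<^sup>2)"
      using DERIV_odd_real_root[of 3 "a i x"] by simp
    have "bounded_linear (a i)"
      unfolding a_def
      by (intro bounded_linear_compose[OF bounded_linear_divide]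
          bounded_linear_compose[OF bounded_linear_vec_nth] bounded_linear_matrix_plus_scaleR)
    then have "(a i has_derivative a i) (at x)"
      by (rule bounded_linear_imp_has_derivative)
    from DERIV_compose_FDERIV[OF root_deriv this]
    show ?thesis
      using \<open>\<beta> \<noteq> 0\<close> by (simp add: a_def field_simps)
  qed
  then show ?thesis
    unfolding T_eq vec_lambda_beta by (rule has_derivative_vec_lambda)
qed

lemma H_obj_expansion_at_critical_point:
  assumes symm: "transpose J = J"
    and critical: "\<And>i. \<beta> * x $ i ^ 3 = (J *v x + \<alpha> *\<^sub>R x) $ i"
  shows "H_obj J \<alpha> \<beta> (x + h) - H_obj J \<alpha> \<beta> x
    = (weighted_inner (\<lambda>i. 3 * \<beta> * (x $ i)\<^sup>2) h h - (J *v h + \<alpha> *\<^sub>R h) \<bullet> h) / 2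
      + \<beta> * (\<Sum>i\<in>UNIV. x $ i * h $ i ^ 3 + h $ i ^ 4 / 4)"
proof -
  have linear_term: "h \<bullet> (J *v x) = (\<Sum>i\<in>UNIV. h $ i * (\<beta> * x $ i ^ 3 - \<alpha> * x $ i))"
    unfolding inner_vec_def by (intro sum.cong) (auto simp: critical)
  have "x \<bullet> (J *v h) = h \<bullet> (J *v x)"
    using matrix_vector_mult_inner_symmetric[OF symm, of x h] by (simp add: inner_commute)
  then have quadratic_term: "(x + h) \<bullet> (J *v (x + h)) = x \<bullet> (J *v x) + 2 * (h \<bullet> (J *v x)) + h \<bullet> (J *v h)"
    by (simp add: matrix_vector_right_distrib inner_add)
  have weighted_term: "weighted_inner (\<lambda>i. 3 * \<beta> * (x $ i)\<^sup>2) h h - (J *v h + \<alpha> *\<^sub>R h) \<bullet> h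
      = (\<Sum>i\<in>UNIV. 3 * \<beta> * (x $ i)\<^sup>2 * h $ i * h $ i) - \<alpha> * (\<Sum>i\<in>UNIV. h $ i ^ 2) - h \<bullet> (J *v h)"
    unfolding weighted_inner_def
    by (simp add: inner_vec_def power2_eq_square sum.distrib sum_distrib_left algebra_simps)
  show ?thesis
    unfolding H_obj_def quadratic_term linear_term weighted_term
    by (simp add: sum_subtractf sum.distrib sum_distrib_left algebra_simps power2_eq_square
        power3_eq_cube power4_eq_xxxx sum_divide_distrib add_divide_distrib diff_divide_distrib)
qed

lemma doch_fixed_point_hessian_pos:
  fixes J :: "real^'n^'n"
  assumes symm: "transpose J = J" and "\<beta> > 0"
    and fixed: "doch_map J \<alpha> \<beta> x = x" and nonzero: "\<And>i. x $ i \<noteq> 0"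
    and norm_less: "onorm (frechet_derivative (doch_map J \<alpha> \<beta>) (at x)) < 1"
    and "h \<noteq> 0"
  shows "(J *v h + \<alpha> *\<^sub>R h) \<bullet> h < weighted_inner (\<lambda>i. 3 * \<beta> * (x $ i)\<^sup>2) h h"
proof -
  define A where "A = (\<lambda>h::real^'n. J *v h + \<alpha> *\<^sub>R h)"
  define w where "w = (\<lambda>i. 3 * \<beta> * (x $ i)\<^sup>2)"
  define B where "B = (\<lambda>h. \<chi> i. A h $ i / w i)"
  have deriv: "(doch_map J \<alpha> \<beta> has_derivative B) (at x)"
    using doch_map_has_derivative[of \<beta> J \<alpha> x] \<open>\<beta> > 0\<close> nonzero
    unfolding fixed by (simp add: A_def B_def w_def)
  have w_pos: "w i > 0" for i
    using nonzero \<open>\<beta> > 0\<close> by (simp add: w_def)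
  have A_symmetric: "A y \<bullet> z = y \<bullet> A z" for y z
    using matrix_vector_mult_inner_symmetric[OF symm]
    by (simp add: A_def inner_add_left inner_add_right)
  have contraction: "norm (B y) \<le> onorm B * norm y" for y
    by (rule onorm[OF has_derivative_bounded_linear[OF deriv]])
  have "onorm B < 1"
    using norm_less frechet_derivative_at[OF deriv] by simp
  have "A h \<bullet> h < weighted_inner w h h"
    using w_pos A_symmetric contraction \<open>onorm B < 1\<close> \<open>h \<noteq> 0\<close> unfolding B_def
    by (rule contraction_weighted_selfadjoint_less)
  then show ?thesis
    by (simp add: A_def w_def)
qed

lemma H_obj_strict_local_min_at_critical_point:
  fixes J :: "real^'n^'n"
  assumes symm: "transpose J = J" and "\<beta> \<ge> 0"
    and critical: "\<And>i. \<beta> * x $ i ^ 3 = (J *v x + \<alpha> *\<^sub>R x) $ i"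
    and hessian_pos: "\<And>h. h \<noteq> 0 \<Longrightarrow> (J *v h + \<alpha> *\<^sub>R h) \<bullet> h < weighted_inner (\<lambda>i. 3 * \<beta> * (x $ i)\<^sup>2) h h"
  shows "strict_local_min (H_obj J \<alpha> \<beta>) x"
proof -
  define q where "q = (\<lambda>h. weighted_inner (\<lambda>i. 3 * \<beta> * (x $ i)\<^sup>2) h h - (J *v h + \<alpha> *\<^sub>R h) \<bullet> h)"
  have "linear (\<lambda>h. J *v h + \<alpha> *\<^sub>R h)"
    by (intro bounded_linear.linear bounded_linear_matrix_plus_scaleR)
  then obtain \<mu> where "\<mu> > 0" and coercive: "\<And>h. \<mu> * (norm h)\<^sup>2 \<le> q h"
    using weighted_inner_minus_coercive hessian_pos unfolding q_def by blast
  show ?thesis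
  proof (rule strict_local_min_of_quadratic_growth)
    show "\<mu> / 2 > 0" and "\<beta> * norm x \<ge> 0"
      using \<open>\<mu> > 0\<close> \<open>\<beta> \<ge> 0\<close> by simp_all
    fix h
    have "\<mu> / 2 * (norm h)\<^sup>2 \<le> q h / 2"
      using coercive[of h] by simp
    moreover have "- (\<beta> * norm x * norm h ^ 3) \<le> \<beta> * (\<Sum>i\<in>UNIV. x $ i * h $ i ^ 3 + h $ i ^ 4 / 4)"
      using mult_left_mono[OF sum_cubic_quartic_ge \<open>\<beta> \<ge> 0\<close>] by (simp add: mult.assoc)
    ultimately show "\<mu> / 2 * (norm h)\<^sup>2 - \<beta> * norm x * norm h ^ 3 \<le> H_obj J \<alpha> \<beta> (x + h) - H_obj J \<alpha> \<beta> x"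
      unfolding H_obj_expansion_at_critical_point[OF symm critical] q_def by linarith
  qed
qed

theorem propositionS11:
  fixes J :: "real^'n^'n" and \<alpha> \<beta> :: real
    and x :: "nat \<Rightarrow> real^'n" and xstar :: "real^'n"
  assumes symm: "transpose J = J"
    and diag0: "\<forall>i. J $ i $ i = 0"
    and apos: "\<alpha> > 0" and bpos: "\<beta> > 0"
    and lmin: "lambda_min (J + \<alpha> *\<^sub>R mat 1) > 0"
    and iter: "\<forall>k. x (Suc k) = doch_map J \<alpha> \<beta> (x k)"
    and lim: "x \<longlonglongrightarrow> xstar"
    and nz: "\<forall>i. xstar $ i \<noteq> 0"
    and jac: "doch_map J \<alpha> \<beta> differentiable (at xstar)"
    and jacnorm: "onorm (frechet_derivative (doch_map J \<alpha> \<beta>) (at xstar)) < 1"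
  shows "strict_local_min (H_obj J \<alpha> \<beta>) xstar"
proof -
  have "isCont (doch_map J \<alpha> \<beta>) xstar"
    using jac by (simp add: differentiable_imp_continuous_within)
  with lim have fixed: "doch_map J \<alpha> \<beta> xstar = xstar"
    by (rule limit_of_iteration_is_fixed_point[rotated]) (simp add: iter)
  show ?thesis
  proof (rule H_obj_strict_local_min_at_critical_point[OF symm])
    show "\<beta> \<ge> 0"
      using bpos by simp
    show "\<beta> * xstar $ i ^ 3 = (J *v xstar + \<alpha> *\<^sub>R xstar) $ i" for i
      using bpos fixed by (simp add: doch_map_fixed_point_cube)
    show "(J *v h + \<alpha> *\<^sub>R h) \<bullet> h < weighted_inner (\<lambda>i. 3 * \<beta> * (xstar $ i)\<^sup>2) h h" if "h \<noteq> 0" for h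
      using symm bpos fixed nz jacnorm that by (simp add: doch_fixed_point_hessian_pos)
  qed
qed

end
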